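(* Let $M(C,\bar\xi,\pi)$ be a Myller configuration with Darboux frame $(\bar\xi,\bar\mu,\bar v)$ and invariants $G,K,T$ such that $(G(s),T(s))\neq(0,0)$ for all $s$, and let $\bar W_r$ be its unit RD-vector field. Then $C$ is a $W_r$-helix in $M$ if and only if $C$ is a $\bar\mu$-helix in $M$.
   Context: Let $C$ be a smooth curve in $E^3$ parametrized by arclength $s$; primes denote $d/ds$. A Myller configuration $M(C,\bar\xi,\pi)$ consists of a smooth unit vector field $\bar\xi$ along $C$ and a smooth oriented plane field $\pi$ with $\bar\xi\in\pi$; $\bar v$ is the unit normal of $\pi$, $\bar\mu=\bar v\times\bar\xi$, and $\bar\xi'=G\bar\mu+K\bar v$, $\bar\mu'=-G\bar\xi+T\bar v$, $\bar v'=-K\bar\xi-T\bar\mu$. The rectifying-type Darboux vector (RD-vector) is $W_r=T\bar\xi+G\bar v$, $\bar W_r=W_r/\|W_r\|$. $C$ is a $W_r$-helix if $\langle\bar W_r,\bar l_r\rangle$ is constant for some constant unit vector $\bar l_r$; $C$ is a $\bar\mu$-helix if $\langle\bar\mu,\bar d_\mu\rangle$ is constant for some constant unit vector $\bar d_\mu$. *)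

theory Defs
  imports "HOL-Analysis.Analysis"
begin

definition smooth_on_param :: "real set \<Rightarrow> (real \<Rightarrow> 'a::real_normed_vector) \<Rightarrow> bool" where
  "smooth_on_param I f \<longleftrightarrow>
     (\<exists>D :: nat \<Rightarrow> real \<Rightarrow> 'a. D 0 = f \<and>
        (\<forall>n. \<forall>s\<in>I. (D n has_vector_derivative D (Suc n) s) (at s)))"

text \<open>Myller configuration M(C, xi, pi) along a curve c parametrized by arclength on I,
  with Darboux frame (xi, mu, nu) (nu the unit normal of the plane field pi,
  mu = nu x xi) and invariants G, K, T.\<close>
definition myller_config ::
  "real set \<Rightarrow> (real \<Rightarrow> real^3) \<Rightarrow> (real \<Rightarrow> real^3) \<Rightarrow> (real \<Rightarrow> real^3) \<Rightarrow> (real \<Rightarrow> real^3)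
   \<Rightarrow> (real \<Rightarrow> real) \<Rightarrow> (real \<Rightarrow> real) \<Rightarrow> (real \<Rightarrow> real) \<Rightarrow> bool" where
  "myller_config I c xi mu nu G K T \<longleftrightarrow>
     smooth_on_param I c \<and> smooth_on_param I xi \<and> smooth_on_param I nu \<and>
     smooth_on_param I G \<and> smooth_on_param I K \<and> smooth_on_param I T \<and>
     (\<forall>s\<in>I. norm (vector_derivative c (at s)) = 1 \<and> c differentiable (at s)) \<and>
     (\<forall>s\<in>I. norm (xi s) = 1 \<and> norm (nu s) = 1 \<and> xi s \<bullet> nu s = 0 \<and>
             mu s = cross3 (nu s) (xi s)) \<and>
     (\<forall>s\<in>I. (xi has_vector_derivative (G s *\<^sub>R mu s + K s *\<^sub>R nu s)) (at s)) \<and>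
     (\<forall>s\<in>I. (mu has_vector_derivative (- G s *\<^sub>R xi s + T s *\<^sub>R nu s)) (at s)) \<and>
     (\<forall>s\<in>I. (nu has_vector_derivative (- K s *\<^sub>R xi s - T s *\<^sub>R mu s)) (at s))"

definition RD_vector :: "(real \<Rightarrow> real^3) \<Rightarrow> (real \<Rightarrow> real^3) \<Rightarrow> (real \<Rightarrow> real) \<Rightarrow> (real \<Rightarrow> real)
   \<Rightarrow> real \<Rightarrow> real^3" where
  "RD_vector xi nu G T s = T s *\<^sub>R xi s + G s *\<^sub>R nu s"

definition unit_RD_vector :: "(real \<Rightarrow> real^3) \<Rightarrow> (real \<Rightarrow> real^3) \<Rightarrow> (real \<Rightarrow> real) \<Rightarrow> (real \<Rightarrow> real)
   \<Rightarrow> real \<Rightarrow> real^3" where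
  "unit_RD_vector xi nu G T s = (1 / norm (RD_vector xi nu G T s)) *\<^sub>R RD_vector xi nu G T s"

definition field_helix :: "real set \<Rightarrow> (real \<Rightarrow> real^3) \<Rightarrow> bool" where
  "field_helix I X \<longleftrightarrow> (\<exists>l :: real^3. \<exists>k :: real. norm l = 1 \<and> (\<forall>s\<in>I. X s \<bullet> l = k))"

definition Wr_helix :: "real set \<Rightarrow> (real \<Rightarrow> real^3) \<Rightarrow> (real \<Rightarrow> real^3) \<Rightarrow> (real \<Rightarrow> real)
   \<Rightarrow> (real \<Rightarrow> real) \<Rightarrow> bool" where
  "Wr_helix I xi nu G T \<longleftrightarrow> field_helix I (unit_RD_vector xi nu G T)"

definition mu_helix :: "real set \<Rightarrow> (real \<Rightarrow> real^3) \<Rightarrow> bool" where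
  "mu_helix I mu \<longleftrightarrow> field_helix I mu"

end

theory Submission
  imports Defs
begin

text \<open>Write \<open>r = sqrt (T\<^sup>2 + G\<^sup>2) = |W\<^sub>r|\<close>, \<open>w = W\<^sub>r / r\<close>, and for a fixed vector \<open>e\<close> let
  \<open>X, Y, Z\<close> be its coordinates in the Darboux frame. Then \<open>w \<bullet> e = (T X + G Z) / r\<close>, and the
  frame equations give \<open>(w \<bullet> e)' = Y' \<beta> / r\<^sup>3\<close> with \<open>\<beta> = T G' - T' G + K r\<^sup>2\<close>. So if
  \<open>\<mu> \<bullet> e = Y\<close> is constant, so is \<open>w \<bullet> e\<close>.

  Conversely let \<open>w \<bullet> l = k\<close> be constant for a unit vector \<open>l\<close>, so that \<open>Y' \<beta> = 0\<close>. On the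
  open set where \<open>\<beta> \<noteq> 0\<close> we get \<open>Y' = 0\<close>, hence \<open>X = k T / r\<close> and \<open>Z = k G / r\<close>;
  differentiating these gives \<open>Y r\<^sup>3 = - k \<beta>\<close>, and with \<open>X\<^sup>2 + Y\<^sup>2 + Z\<^sup>2 = 1\<close> this yields
  \<open>k\<^sup>2 \<beta>\<^sup>2 = (1 - k\<^sup>2) r\<^sup>6\<close>. Thus \<open>{\<beta> \<noteq> 0}\<close> is empty if \<open>k\<^sup>2 = 1\<close>, and otherwise it is
  closed as well as open in the interval. If \<open>\<beta>\<close> vanishes nowhere, \<open>\<mu> \<bullet> l\<close> is constant;
  if it vanishes everywhere, \<open>w\<close> itself is constant and \<open>\<mu>\<close> is orthogonal to it.\<close>

lemma has_real_derivative_inner_right: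
  assumes "(f has_vector_derivative v) (at s)"
  shows "((\<lambda>t. f t \<bullet> e) has_real_derivative v \<bullet> e) (at s)"
proof -
  have "((\<lambda>t. f t \<bullet> e) has_derivative (\<lambda>h. (h *\<^sub>R v) \<bullet> e)) (at s)"
    using has_derivative_inner_left[OF assms[unfolded has_vector_derivative_def]] .
  moreover have "(\<lambda>h. (h *\<^sub>R v) \<bullet> e) = (*) (v \<bullet> e)" by (auto simp: fun_eq_iff)
  ultimately show ?thesis unfolding has_field_derivative_def by simp
qed

lemma has_real_derivative_unique_on_open:
  assumes "(f has_real_derivative D) (at s)" "(g has_real_derivative E) (at s)"
    and "open S" "s \<in> S" "\<And>t. t \<in> S \<Longrightarrow> f t = g t"
  shows "D = E"
  using DERIV_unique[OF has_field_derivative_transform_within_open[OF assms(1,3,4,5)] assms(2)] .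

lemma is_interval_has_real_derivative_zero_eq:
  assumes "is_interval I" "\<And>s. s \<in> I \<Longrightarrow> (f has_real_derivative 0) (at s)"
    and "a \<in> I" "b \<in> I"
  shows "f a = f b"
proof -
  obtain c where "\<forall>s\<in>I. f s = c"
    using has_field_derivative_zero_constant[OF is_interval_convex[OF assms(1)]]
      assms(2) has_field_derivative_at_within by metis
  with assms(3,4) show ?thesis by simp
qed

lemma smooth_on_param_has_continuous_derivative:
  fixes f :: "real \<Rightarrow> real"
  assumes "smooth_on_param I f"
  obtains f' where "\<And>s. s \<in> I \<Longrightarrow> (f has_real_derivative f' s) (at s)" "continuous_on I f'"
proof -
  obtain D :: "nat \<Rightarrow> real \<Rightarrow> real"
    where D: "D 0 = f" "\<And>n s. s \<in> I \<Longrightarrow> (D n has_real_derivative D (Suc n) s) (at s)"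
    using assms has_real_derivative_iff_has_vector_derivative
    unfolding smooth_on_param_def by metis
  have "continuous_on I (D 1)"
    using D(2)[of _ 1] by (intro continuous_at_imp_continuous_on ballI) (auto intro: DERIV_isCont)
  then show thesis
    by (rule that[rotated]) (use D in auto)
qed

lemma smooth_on_param_imp_continuous_on:
  fixes f :: "real \<Rightarrow> real"
  assumes "smooth_on_param I f"
  shows "continuous_on I f"
  using smooth_on_param_has_continuous_derivative[OF assms]
  by (metis DERIV_isCont continuous_at_imp_continuous_on)

lemma cross3_frame_sum_squares:
  fixes x n e :: "real^3"
  assumes "norm x = 1" "norm n = 1" "x \<bullet> n = 0"
  shows "(x \<bullet> e)\<^sup>2 + (cross3 n x \<bullet> e)\<^sup>2 + (n \<bullet> e)\<^sup>2 = (norm e)\<^sup>2"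
proof -
  have "(norm (cross3 n x))\<^sup>2 = 1"
    using norm_cross_dot[of n x] assms by (simp add: inner_commute)
  then have "(norm (cross3 e (cross3 n x)))\<^sup>2 + (e \<bullet> cross3 n x)\<^sup>2 = (norm e)\<^sup>2"
    using norm_cross_dot[of e "cross3 n x"] by (simp add: power_mult_distrib)
  moreover have "cross3 e (cross3 n x) = (e \<bullet> x) *\<^sub>R n - (e \<bullet> n) *\<^sub>R x"
    by (simp add: cross3_simps forall_3)
  ultimately show ?thesis
    using assms unfolding power2_norm_eq_inner
    by (simp add: inner_diff_left inner_diff_right inner_commute power2_eq_square norm_eq_1)
qed

locale myller_frame =
  fixes I :: "real set" and xi mu nu :: "real \<Rightarrow> real^3" and G K T G' T' :: "real \<Rightarrow> real"
  assumes open_I: "open I" and interval_I: "is_interval I"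
    and frame: "\<And>s. s \<in> I \<Longrightarrow>
      norm (xi s) = 1 \<and> norm (nu s) = 1 \<and> xi s \<bullet> nu s = 0 \<and> mu s = cross3 (nu s) (xi s)"
    and xi_der: "\<And>s. s \<in> I \<Longrightarrow> (xi has_vector_derivative (G s *\<^sub>R mu s + K s *\<^sub>R nu s)) (at s)"
    and mu_der: "\<And>s. s \<in> I \<Longrightarrow> (mu has_vector_derivative (- G s *\<^sub>R xi s + T s *\<^sub>R nu s)) (at s)"
    and nu_der: "\<And>s. s \<in> I \<Longrightarrow> (nu has_vector_derivative (- K s *\<^sub>R xi s - T s *\<^sub>R mu s)) (at s)"
    and G_der: "\<And>s. s \<in> I \<Longrightarrow> (G has_real_derivative G' s) (at s)"
    and T_der: "\<And>s. s \<in> I \<Longrightarrow> (T has_real_derivative T' s) (at s)"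
    and continuous_K: "continuous_on I K"
    and continuous_G': "continuous_on I G'" and continuous_T': "continuous_on I T'"
    and nondegenerate: "\<And>s. s \<in> I \<Longrightarrow> (G s, T s) \<noteq> (0, 0)"
begin

abbreviation w :: "real \<Rightarrow> real^3" where "w \<equiv> unit_RD_vector xi nu G T"

definition r :: "real \<Rightarrow> real" where "r s = sqrt ((T s)\<^sup>2 + (G s)\<^sup>2)"

definition X :: "real^3 \<Rightarrow> real \<Rightarrow> real" where "X e s = xi s \<bullet> e"
definition Y :: "real^3 \<Rightarrow> real \<Rightarrow> real" where "Y e s = mu s \<bullet> e"
definition Z :: "real^3 \<Rightarrow> real \<Rightarrow> real" where "Z e s = nu s \<bullet> e"

definition P :: "real^3 \<Rightarrow> real \<Rightarrow> real" where "P e s = T s * X e s + G s * Z e s"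
definition U :: "real^3 \<Rightarrow> real \<Rightarrow> real" where "U e s = - G s * X e s + T s * Z e s"

definition beta :: "real \<Rightarrow> real" where
  "beta s = T s * G' s - T' s * G s + K s * (r s)\<^sup>2"

lemma r_squared: "(r s)\<^sup>2 = (T s)\<^sup>2 + (G s)\<^sup>2"
  unfolding r_def by simp

lemma r_pos: "s \<in> I \<Longrightarrow> r s > 0"
  using nondegenerate unfolding r_def by (auto simp: sum_power2_gt_zero_iff)

lemma norm_RD_vector:
  assumes "s \<in> I" shows "norm (RD_vector xi nu G T s) = r s"
proof -
  have "(norm (RD_vector xi nu G T s))\<^sup>2 = (T s)\<^sup>2 + (G s)\<^sup>2"
    using frame[OF assms] unfolding RD_vector_def power2_norm_eq_inner
    by (simp add: inner_add_left inner_add_right inner_commute power2_eq_square norm_eq_1)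
  then show ?thesis
    unfolding r_def by (simp add: real_sqrt_unique)
qed

lemma norm_w:
  assumes "s \<in> I" shows "norm (w s) = 1"
  using norm_RD_vector[OF assms] r_pos[OF assms] unfolding unit_RD_vector_def by simp

lemma w_inner: "s \<in> I \<Longrightarrow> w s \<bullet> e = P e s / r s"
  using norm_RD_vector unfolding unit_RD_vector_def RD_vector_def P_def X_def Z_def
  by (simp add: inner_add_left divide_simps)

lemma mu_orthogonal_w: "s \<in> I \<Longrightarrow> mu s \<bullet> w s = 0"
  using frame unfolding unit_RD_vector_def RD_vector_def
  by (simp add: inner_add_right dot_cross_self inner_commute)

lemma coordinates_sum_squares: "s \<in> I \<Longrightarrow> (X e s)\<^sup>2 + (Y e s)\<^sup>2 + (Z e s)\<^sup>2 = (norm e)\<^sup>2"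
  using frame cross3_frame_sum_squares unfolding X_def Y_def Z_def by metis

lemma X_der: "s \<in> I \<Longrightarrow> (X e has_real_derivative G s * Y e s + K s * Z e s) (at s)"
  using has_real_derivative_inner_right[OF xi_der, of s e]
  unfolding X_def Y_def Z_def by (simp add: inner_add_left)

lemma Y_der: "s \<in> I \<Longrightarrow> (Y e has_real_derivative U e s) (at s)"
  using has_real_derivative_inner_right[OF mu_der, of s e]
  unfolding X_def Y_def Z_def U_def by (simp add: inner_add_left inner_diff_left)

lemma Z_der: "s \<in> I \<Longrightarrow> (Z e has_real_derivative - K s * X e s - T s * Y e s) (at s)"
  using has_real_derivative_inner_right[OF nu_der, of s e]
  unfolding X_def Y_def Z_def by (simp add: inner_diff_left)

lemma r_der:
  assumes s: "s \<in> I"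
  shows "(r has_real_derivative (T s * T' s + G s * G' s) / r s) (at s)"
proof -
  have "(G s)\<^sup>2 + (T s)\<^sup>2 > 0"
    using r_pos[OF s] unfolding r_def by (simp add: add.commute)
  then show ?thesis
    unfolding r_def[abs_def]
    by (auto intro!: derivative_eq_intros G_der[OF s] T_der[OF s] simp: field_split_simps)
qed

lemma continuous_on_r: "continuous_on I r"
  using r_der by (intro continuous_at_imp_continuous_on ballI) (auto intro: DERIV_isCont)

lemma continuous_on_beta: "continuous_on I beta"
proof -
  have "continuous_on I T" "continuous_on I G"
    using T_der G_der by (auto intro!: continuous_at_imp_continuous_on intro: DERIV_isCont)
  then show ?thesis
    unfolding beta_def[abs_def]
    by (intro continuous_intros continuous_on_r continuous_K continuous_G' continuous_T')
qed

lemma open_nonvanishing_beta: "open {s \<in> I. beta s \<noteq> 0}"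
proof -
  have "{s \<in> I. beta s \<noteq> 0} = I \<inter> beta -` (- {0})"
    by auto
  then show ?thesis
    using continuous_open_preimage[OF continuous_on_beta open_I open_Compl[OF closed_singleton]]
    by simp
qed

lemma P_der:
  assumes s: "s \<in> I"
  shows "(P e has_real_derivative T' s * X e s + G' s * Z e s + K s * U e s) (at s)"
proof -
  have "(P e has_real_derivative T' s * X e s + T s * (G s * Y e s + K s * Z e s)
      + (G' s * Z e s + G s * (- K s * X e s - T s * Y e s))) (at s)"
    unfolding P_def[abs_def]
    by (auto intro!: derivative_eq_intros G_der[OF s] T_der[OF s] X_der[OF s] Z_der[OF s])
  then show ?thesis
    unfolding U_def by (simp add: algebra_simps)
qed

lemma w_inner_der:
  assumes s: "s \<in> I"
  shows "((\<lambda>t. w t \<bullet> e) has_real_derivative U e s * beta s / (r s)^3) (at s)"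
proof -
  have r: "r s > 0"
    using r_pos[OF s] .
  have "((\<lambda>t. P e t / r t) has_real_derivative
      ((T' s * X e s + G' s * Z e s + K s * U e s) * r s
        - P e s * ((T s * T' s + G s * G' s) / r s)) / (r s * r s)) (at s)"
    using DERIV_divide[OF P_der[OF s] r_der[OF s]] r by simp
  also have "((T' s * X e s + G' s * Z e s + K s * U e s) * r s
        - P e s * ((T s * T' s + G s * G' s) / r s)) / (r s * r s)
      = ((T' s * X e s + G' s * Z e s + K s * U e s) * (r s)\<^sup>2
        - P e s * (T s * T' s + G s * G' s)) / (r s)^3"
    using r by (simp add: field_simps power2_eq_square power3_eq_cube)
  also have "\<dots> = U e s * beta s / (r s)^3"
    unfolding beta_def r_squared P_def U_def by algebra
  finally show ?thesis
    using has_field_derivative_transform_within_open[OF _ open_I s] w_inner by simp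
qed

lemma T_div_r_der:
  assumes s: "s \<in> I"
  shows "((\<lambda>t. T t / r t) has_real_derivative G s * (G s * T' s - T s * G' s) / (r s)^3) (at s)"
proof -
  have r: "r s > 0" "(r s)\<^sup>2 = (T s)\<^sup>2 + (G s)\<^sup>2"
    using r_pos[OF s] r_squared[of s] by simp_all
  have "((\<lambda>t. T t / r t) has_real_derivative
      (T' s * r s - T s * ((T s * T' s + G s * G' s) / r s)) / (r s * r s)) (at s)"
    using DERIV_divide[OF T_der[OF s] r_der[OF s]] r by simp
  moreover have "(T' s * r s - T s * ((T s * T' s + G s * G' s) / r s)) / (r s * r s)
      = G s * (G s * T' s - T s * G' s) / (r s)^3"
    using r by (simp add: field_simps power2_eq_square power3_eq_cube)
  ultimately show ?thesis by simp
qed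

lemma G_div_r_der:
  assumes s: "s \<in> I"
  shows "((\<lambda>t. G t / r t) has_real_derivative T s * (T s * G' s - G s * T' s) / (r s)^3) (at s)"
proof -
  have r: "r s > 0" "(r s)\<^sup>2 = (T s)\<^sup>2 + (G s)\<^sup>2"
    using r_pos[OF s] r_squared[of s] by simp_all
  have "((\<lambda>t. G t / r t) has_real_derivative
      (G' s * r s - G s * ((T s * T' s + G s * G' s) / r s)) / (r s * r s)) (at s)"
    using DERIV_divide[OF G_der[OF s] r_der[OF s]] r by simp
  moreover have "(G' s * r s - G s * ((T s * T' s + G s * G' s) / r s)) / (r s * r s)
      = T s * (T s * G' s - G s * T' s) / (r s)^3"
    using r by (simp add: field_simps power2_eq_square power3_eq_cube)
  ultimately show ?thesis by simp
qed

lemma Wr_helix_if_mu_helix: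
  assumes "s0 \<in> I" "mu_helix I mu"
  shows "Wr_helix I xi nu G T"
proof -
  obtain d m where d: "norm d = 1" "\<And>s. s \<in> I \<Longrightarrow> Y d s = m"
    using assms(2) unfolding mu_helix_def field_helix_def Y_def by blast
  have "U d s = 0" if s: "s \<in> I" for s
    using has_real_derivative_unique_on_open[OF Y_der[OF s] DERIV_const open_I s] d(2) by simp
  then have "((\<lambda>t. w t \<bullet> d) has_real_derivative 0) (at s)" if "s \<in> I" for s
    using w_inner_der[OF that, of d] that by simp
  then have "w s \<bullet> d = w s0 \<bullet> d" if "s \<in> I" for s
    by (rule is_interval_has_real_derivative_zero_eq[OF interval_I _ that assms(1)])
  then show ?thesis
    unfolding Wr_helix_def field_helix_def using d(1) by blast
qed

lemma w_constant_if_beta_zero: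
  assumes beta: "\<And>s. s \<in> I \<Longrightarrow> beta s = 0" and "s \<in> I" "t \<in> I"
  shows "w s = w t"
proof -
  have "w s \<bullet> e = w t \<bullet> e" for e
  proof -
    have "((\<lambda>t. w t \<bullet> e) has_real_derivative 0) (at s)" if "s \<in> I" for s
      using w_inner_der[OF that, of e] beta[OF that] by simp
    then show ?thesis
      by (rule is_interval_has_real_derivative_zero_eq[OF interval_I _ assms(2,3)])
  qed
  then show ?thesis
    using vector_eq_rdot by blast
qed

context
  fixes l :: "real^3" and k :: real
  assumes unit_l: "norm l = 1" and w_angle: "\<And>s. s \<in> I \<Longrightarrow> w s \<bullet> l = k"
begin

lemma U_beta_zero:
  assumes s: "s \<in> I" shows "U l s * beta s = 0"
proof -
  have "U l s * beta s / (r s)^3 = 0"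
    using has_real_derivative_unique_on_open[OF w_inner_der[OF s] DERIV_const open_I s] w_angle by simp
  then show ?thesis
    using r_pos[OF s] by simp
qed

lemma coordinates_if_U_zero:
  assumes s: "s \<in> I" and U: "U l s = 0"
  shows "X l s = k * (T s / r s)" "Z l s = k * (G s / r s)"
proof -
  have r: "r s > 0"
    using r_pos[OF s] .
  have P: "P l s = k * r s"
    using w_angle[OF s] w_inner[OF s] r by (simp add: field_simps)
  have "X l s * (r s)\<^sup>2 = T s * P l s - G s * U l s"
    unfolding r_squared P_def U_def by algebra
  then show "X l s = k * (T s / r s)"
    using P U r by (simp add: field_simps power2_eq_square)
  have "Z l s * (r s)\<^sup>2 = G s * P l s + T s * U l s"
    unfolding r_squared P_def U_def by algebra
  then show "Z l s = k * (G s / r s)"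
    using P U r by (simp add: field_simps power2_eq_square)
qed

lemma Y_beta_identity:
  assumes s: "s \<in> I" and beta: "beta s \<noteq> 0"
  shows "Y l s * (r s)^3 + k * beta s = 0"
proof -
  let ?S = "{t \<in> I. beta t \<noteq> 0}"
  have S: "open ?S" "s \<in> ?S"
    using open_nonvanishing_beta s beta by auto
  have X: "X l t = k * (T t / r t)" and Z: "Z l t = k * (G t / r t)" if "t \<in> ?S" for t
    using coordinates_if_U_zero U_beta_zero that by auto
  have r: "r s > 0"
    using r_pos[OF s] .
  have "G s * Y l s + K s * Z l s = k * (G s * (G s * T' s - T s * G' s) / (r s)^3)"
    by (rule has_real_derivative_unique_on_open[OF X_der[OF s] DERIV_cmult[OF T_div_r_der[OF s]] S])
      (rule X)
  then have "(G s * Y l s + K s * Z l s) * (r s)^3 = k * (G s * (G s * T' s - T s * G' s))"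
    using r by simp
  moreover have "K s * Z l s * (r s)^3 = k * K s * G s * (r s)\<^sup>2"
    using Z[OF S(2)] r by (simp add: power2_eq_square power3_eq_cube)
  ultimately have "G s * (Y l s * (r s)^3 + k * beta s) = 0"
    unfolding beta_def by algebra
  moreover have "- K s * X l s - T s * Y l s = k * (T s * (T s * G' s - G s * T' s) / (r s)^3)"
    by (rule has_real_derivative_unique_on_open[OF Z_der[OF s] DERIV_cmult[OF G_div_r_der[OF s]] S])
      (rule Z)
  then have "(- K s * X l s - T s * Y l s) * (r s)^3 = k * (T s * (T s * G' s - G s * T' s))"
    using r by simp
  moreover have "K s * X l s * (r s)^3 = k * K s * T s * (r s)\<^sup>2"
    using X[OF S(2)] r by (simp add: power2_eq_square power3_eq_cube)
  ultimately have "T s * (Y l s * (r s)^3 + k * beta s) = 0"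
    unfolding beta_def by algebra
  with \<open>G s * (Y l s * (r s)^3 + k * beta s) = 0\<close> show ?thesis
    using nondegenerate[OF s] by auto
qed

lemma beta_square_identity:
  assumes s: "s \<in> I" and beta: "beta s \<noteq> 0"
  shows "k\<^sup>2 * (beta s)\<^sup>2 = (1 - k\<^sup>2) * (r s)^6"
proof -
  have r: "r s > 0"
    using r_pos[OF s] .
  have U: "U l s = 0"
    using U_beta_zero[OF s] beta by simp
  have "(X l s)\<^sup>2 + (Z l s)\<^sup>2 = k\<^sup>2 * ((T s)\<^sup>2 + (G s)\<^sup>2) / (r s)\<^sup>2"
    unfolding coordinates_if_U_zero[OF s U]
    by (simp add: power_divide power_mult_distrib add_divide_distrib algebra_simps)
  then have "(X l s)\<^sup>2 + (Z l s)\<^sup>2 = k\<^sup>2"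
    using r unfolding r_squared[symmetric] by simp
  then have "k\<^sup>2 + (Y l s)\<^sup>2 = 1"
    using coordinates_sum_squares[OF s, of l] unit_l by simp
  moreover have "(Y l s)\<^sup>2 * (r s)^6 = k\<^sup>2 * (beta s)\<^sup>2"
    using Y_beta_identity[OF s beta] by algebra
  ultimately show ?thesis
    by algebra
qed

lemma beta_vanishes_everywhere_or_nowhere:
  "(\<forall>s\<in>I. beta s = 0) \<or> (\<forall>s\<in>I. beta s \<noteq> 0)"
proof (cases "k\<^sup>2 = 1")
  case True
  have "beta s = 0" if "s \<in> I" for s
  proof (rule ccontr)
    assume "beta s \<noteq> 0"
    with beta_square_identity[OF that this] True show False
      by simp
  qed
  then show ?thesis
    by blast
next
  case False
  define Q where "Q s = k\<^sup>2 * (beta s)\<^sup>2 - (1 - k\<^sup>2) * (r s)^6" for s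
  have "beta s \<noteq> 0 \<longleftrightarrow> Q s = 0" if s: "s \<in> I" for s
  proof
    assume "beta s \<noteq> 0"
    then show "Q s = 0"
      unfolding Q_def using beta_square_identity[OF s] by simp
  next
    assume "Q s = 0"
    then show "beta s \<noteq> 0"
      unfolding Q_def using False r_pos[OF s] by auto
  qed
  then have S: "{s \<in> I. beta s \<noteq> 0} = {s \<in> I. Q s = 0}"
    by blast
  have "continuous_on I Q"
    unfolding Q_def[abs_def] by (intro continuous_intros continuous_on_beta continuous_on_r)
  then have "closedin (top_of_set I) {s \<in> I. beta s \<noteq> 0}"
    unfolding S by (rule continuous_closedin_preimage_constant)
  moreover have "openin (top_of_set I) {s \<in> I. beta s \<noteq> 0}"
    using open_nonvanishing_beta by (intro open_subset) auto
  ultimately have "{s \<in> I. beta s \<noteq> 0} = {} \<or> {s \<in> I. beta s \<noteq> 0} = I"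
    using is_interval_connected[OF interval_I] unfolding connected_clopen by blast
  then show ?thesis
    by blast
qed

end

lemma mu_helix_if_Wr_helix:
  assumes "s0 \<in> I" "Wr_helix I xi nu G T"
  shows "mu_helix I mu"
proof -
  obtain l k where l: "norm l = 1" "\<And>s. s \<in> I \<Longrightarrow> w s \<bullet> l = k"
    using assms(2) unfolding Wr_helix_def field_helix_def by blast
  from beta_vanishes_everywhere_or_nowhere[OF l] show ?thesis
  proof
    assume "\<forall>s\<in>I. beta s = 0"
    then have "mu s \<bullet> w s0 = 0" if "s \<in> I" for s
      using w_constant_if_beta_zero[OF _ that assms(1)] mu_orthogonal_w[OF that] by simp
    then show ?thesis
      unfolding mu_helix_def field_helix_def using norm_w[OF assms(1)] by blast
  next
    assume "\<forall>s\<in>I. beta s \<noteq> 0"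
    then have "(Y l has_real_derivative 0) (at s)" if "s \<in> I" for s
      using Y_der[OF that, of l] U_beta_zero[OF l that] that by simp
    then have "Y l s = Y l s0" if "s \<in> I" for s
      by (rule is_interval_has_real_derivative_zero_eq[OF interval_I _ that assms(1)])
    then have "mu s \<bullet> l = mu s0 \<bullet> l" if "s \<in> I" for s
      using that unfolding Y_def by blast
    then show ?thesis
      unfolding mu_helix_def field_helix_def using l(1) by blast
  qed
qed

end

theorem theorem21:
  fixes I :: "real set" and c xi mu nu :: "real \<Rightarrow> real^3" and G K T :: "real \<Rightarrow> real"
  assumes "open I" and "is_interval I" and "I \<noteq> {}"
    and "myller_config I c xi mu nu G K T"
    and "\<forall>s\<in>I. (G s, T s) \<noteq> (0, 0)"
  shows "Wr_helix I xi nu G T \<longleftrightarrow> mu_helix I mu"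
proof -
  have smooth: "smooth_on_param I G" "smooth_on_param I K" "smooth_on_param I T"
    using assms(4) unfolding myller_config_def by blast+
  obtain G' where G': "\<And>s. s \<in> I \<Longrightarrow> (G has_real_derivative G' s) (at s)" "continuous_on I G'"
    using smooth_on_param_has_continuous_derivative[OF smooth(1)] by blast
  obtain T' where T': "\<And>s. s \<in> I \<Longrightarrow> (T has_real_derivative T' s) (at s)" "continuous_on I T'"
    using smooth_on_param_has_continuous_derivative[OF smooth(3)] by blast
  interpret myller_frame I xi mu nu G K T G' T'
  proof
    show "continuous_on I K"
      using smooth_on_param_imp_continuous_on[OF smooth(2)] .
  qed (use assms G' T' in \<open>auto simp: myller_config_def\<close>)
  obtain s0 where "s0 \<in> I"
    using assms(3) by blast
  then show ?thesis
    using Wr_helix_if_mu_helix mu_helix_if_Wr_helix by blast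
qed

end
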